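(* Let $S$ be a finite poset whose Hasse graph $\Gamma(S)$ is one of the Dynkin graphs $D_n$ ($n\ge4$), $E_6$, $E_7$, $E_8$ or the extended Dynkin graphs $\widetilde E_6$, $\widetilde E_7$, $\widetilde E_8$. Then $S$ contains a terminal point which is a Dynkin point.
   Context: For $S=\{s_1,\dots,s_n\}$, $f_S(x)=\sum_i x_i^2+\sum_{s_i<s_j}x_ix_j$, so $\frac{\partial f_S}{\partial x_m}(x)=2x_m+\sum_{j\ne m,\ s_j\text{ comparable with }s_m}x_j$. The Hasse graph $\Gamma(S)$ has vertices $S$ and an edge between $s,s'$ when one covers the other. A terminal point is a vertex of degree $\le1$ in $\Gamma(S)$. A point $s_m$ is a Dynkin point if there is a nonzero integer vector $d\in\mathbb Z^n$ with $0\le\frac{\partial f_S}{\partial x_m}(d)\le 2$ and $\frac{\partial f_S}{\partial x_j}(d)=0$ for all $j\ne m$. *)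

theory Defs
  imports Main
begin

text \<open>A finite poset is modelled as a finite set S inside a type with a partial order
  (the induced order on S). Vectors x in Z^S are functions 'a => int (values off S are irrelevant).\<close>

definition comparable :: "'a::order \<Rightarrow> 'a \<Rightarrow> bool" where
  "comparable s t \<longleftrightarrow> s < t \<or> t < s"

definition fS :: "'a::order set \<Rightarrow> ('a \<Rightarrow> int) \<Rightarrow> int" where
  "fS S x = (\<Sum>i\<in>S. (x i)^2) + (\<Sum>p\<in>{(i,j). i \<in> S \<and> j \<in> S \<and> i < j}. x (fst p) * x (snd p))"

definition dfS :: "'a::order set \<Rightarrow> ('a \<Rightarrow> int) \<Rightarrow> 'a \<Rightarrow> int" where
  "dfS S x m = 2 * x m + (\<Sum>j\<in>{j\<in>S. j \<noteq> m \<and> comparable j m}. x j)"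

definition covers :: "'a::order set \<Rightarrow> 'a \<Rightarrow> 'a \<Rightarrow> bool" where
  "covers S s t \<longleftrightarrow> s \<in> S \<and> t \<in> S \<and> s < t \<and> \<not> (\<exists>u\<in>S. s < u \<and> u < t)"

definition hasse_adj :: "'a::order set \<Rightarrow> 'a \<Rightarrow> 'a \<Rightarrow> bool" where
  "hasse_adj S s t \<longleftrightarrow> covers S s t \<or> covers S t s"

definition hasse_degree :: "'a::order set \<Rightarrow> 'a \<Rightarrow> nat" where
  "hasse_degree S s = card {t\<in>S. hasse_adj S s t}"

definition terminal_point :: "'a::order set \<Rightarrow> 'a \<Rightarrow> bool" where
  "terminal_point S s \<longleftrightarrow> s \<in> S \<and> hasse_degree S s \<le> 1"

definition dynkin_point :: "'a::order set \<Rightarrow> 'a \<Rightarrow> bool" where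
  "dynkin_point S m \<longleftrightarrow> m \<in> S \<and>
     (\<exists>d :: 'a \<Rightarrow> int. (\<exists>i\<in>S. d i \<noteq> 0) \<and> 0 \<le> dfS S d m \<and> dfS S d m \<le> 2 \<and>
        (\<forall>j\<in>S. j \<noteq> m \<longrightarrow> dfS S d j = 0))"

text \<open>Graphs on the vertex set {0..<N}, given by an edge set of pairs (read undirected).\<close>
definition path_edges :: "nat \<Rightarrow> (nat \<times> nat) set" where
  "path_edges k = {(i, i+1) | i. i + 1 < k}"

definition D_graph :: "nat \<Rightarrow> nat \<times> (nat \<times> nat) set" where
  "D_graph n = (n, path_edges (n - 1) \<union> {(n - 3, n - 1)})"

definition E_graph :: "nat \<Rightarrow> nat \<times> (nat \<times> nat) set" where
  "E_graph n = (n, path_edges (n - 1) \<union> {(2, n - 1)})"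

text \<open>Extended Dynkin graphs: star trees with arms (2,2,2), (3,3,1), (5,2,1).\<close>
definition E6_ext :: "nat \<times> (nat \<times> nat) set" where
  "E6_ext = (7, path_edges 5 \<union> {(2,5), (5,6)})"
definition E7_ext :: "nat \<times> (nat \<times> nat) set" where
  "E7_ext = (8, path_edges 7 \<union> {(3,7)})"
definition E8_ext :: "nat \<times> (nat \<times> nat) set" where
  "E8_ext = (9, path_edges 8 \<union> {(2,8)})"

definition graph_adj :: "(nat \<times> nat) set \<Rightarrow> nat \<Rightarrow> nat \<Rightarrow> bool" where
  "graph_adj E i j \<longleftrightarrow> (i, j) \<in> E \<or> (j, i) \<in> E"

definition hasse_iso :: "'a::order set \<Rightarrow> nat \<times> (nat \<times> nat) set \<Rightarrow> bool" where
  "hasse_iso S G \<longleftrightarrow> (\<exists>\<phi>. bij_betw \<phi> S {..<fst G} \<and>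
      (\<forall>x\<in>S. \<forall>y\<in>S. hasse_adj S x y \<longleftrightarrow> graph_adj (snd G) (\<phi> x) (\<phi> y)))"

end

theory Submission
  imports Defs "HOL-Library.Dual_Ordered_Lattice"
begin

text \<open>
  The partial derivatives of f_S at d are the entries of B d, where B has 2 on the diagonal
  and 1 at comparable pairs; a Dynkin point m needs a nonzero integer d with B d = c e_m and
  0 <= c <= 2 (the sign of c is immaterial, replace d by -d).

  Solutions propagate along arms of the Hasse graph. Let x be a leaf hanging off p, where p
  has exactly one further neighbour q. In the comparability graph, x is then either a pendant
  vertex at p (if x and q lie on the same side of p) or a twin of p (if x, p, q form a chain).
  In both cases a solution d for S - {x} at p with (B d)_p = c and d_p = delta extends to a
  solution for S at x with value 2c - delta and coordinate c. Along an arm of length L the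
  value therefore changes by L (c - delta).

  Each graph of the theorem is a small tree (D4, D5, D6 or E6) with a possibly empty arm
  attached. For these trees the required vectors are verified by computation for every
  orientation of the edges, which covers every poset with that Hasse graph; at the tip of the
  arm the value is 2 for D_n and 0, 1 or 2 for the exceptional graphs.
\<close>

section \<open>Hasse graphs of finite posets\<close>

lemma comparable_sym: "comparable s t \<longleftrightarrow> comparable t s"
  unfolding comparable_def by auto

lemma not_comparable_self [simp]: "\<not> comparable s s"
  unfolding comparable_def by simp

lemma hasse_adj_imp_less: "hasse_adj S s t \<Longrightarrow> s < t \<or> t < s"
  unfolding hasse_adj_def covers_def by auto

lemma covers_imp_hasse_adj: "covers S s t \<Longrightarrow> hasse_adj S s t \<and> hasse_adj S t s"
  unfolding hasse_adj_def by simp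

lemma exists_covers_above:
  assumes "finite S" "x \<in> S" "y \<in> S" "x < y"
  shows "\<exists>w\<in>S. covers S x w \<and> w \<le> y"
proof -
  let ?B = "{z\<in>S. x < z \<and> z \<le> y}"
  have "finite ?B" "y \<in> ?B" using assms by auto
  then obtain w where w: "w \<in> ?B" and min: "\<forall>z\<in>?B. z \<le> w \<longrightarrow> w = z"
    using finite_has_minimal[of ?B] by blast
  have "\<not> (u \<in> S \<and> x < u \<and> u < w)" for u
    using w min[rule_format, of u] less_le_trans[of u w y] by (auto simp: less_imp_le)
  with w show ?thesis unfolding covers_def using assms by auto
qed

lemma exists_covers_below:
  assumes "finite S" "x \<in> S" "y \<in> S" "x < y"
  shows "\<exists>w\<in>S. covers S w y \<and> x \<le> w"
proof -
  let ?B = "{z\<in>S. x \<le> z \<and> z < y}"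
  have "finite ?B" "x \<in> ?B" using assms by auto
  then obtain w where w: "w \<in> ?B" and max: "\<forall>z\<in>?B. w \<le> z \<longrightarrow> w = z"
    using finite_has_maximal[of ?B] by blast
  have "\<not> (u \<in> S \<and> w < u \<and> u < y)" for u
    using w max[rule_format, of u] le_less_trans[of x w u] by (auto simp: less_imp_le)
  with w show ?thesis unfolding covers_def using assms by auto
qed

lemma less_iff_trancl_covers:
  assumes "finite S" "x \<in> S" "y \<in> S"
  shows "x < y \<longleftrightarrow> (x, y) \<in> {(a, b). covers S a b}\<^sup>+"
proof
  show "(x, y) \<in> {(a, b). covers S a b}\<^sup>+ \<Longrightarrow> x < y"
    by (induction rule: trancl_induct) (auto simp: covers_def)
  show "x < y \<Longrightarrow> (x, y) \<in> {(a, b). covers S a b}\<^sup>+"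
    using assms(2)
  proof (induction "card {z\<in>S. x < z \<and> z \<le> y}" arbitrary: x rule: less_induct)
    case less
    obtain w where w: "w \<in> S" "covers S x w" "w \<le> y"
      using exists_covers_above[OF assms(1) less.prems(2) assms(3) less.prems(1)] by blast
    show ?case
    proof (cases "w = y")
      case True
      with w show ?thesis by auto
    next
      case False
      have "{z\<in>S. w < z \<and> z \<le> y} \<subset> {z\<in>S. x < z \<and> z \<le> y}"
        using w False by (auto simp: covers_def)
      then have "card {z\<in>S. w < z \<and> z \<le> y} < card {z\<in>S. x < z \<and> z \<le> y}"
        using assms(1) by (simp add: psubset_card_mono)
      then have "(w, y) \<in> {(a, b). covers S a b}\<^sup>+"
        using less.hyps w False by simp
      with w show ?thesis by (auto intro: trancl_into_trancl2)
    qed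
  qed
qed

lemma hasse_adj_Diff_terminal_point:
  assumes "finite S" "terminal_point S l" "x \<in> S - {l}" "y \<in> S - {l}"
  shows "hasse_adj (S - {l}) x y \<longleftrightarrow> hasse_adj S x y"
proof -
  have covers_iff: "covers (S - {l}) a b \<longleftrightarrow> covers S a b" if ab: "a \<in> S - {l}" "b \<in> S - {l}" for a b
  proof
    assume cov: "covers (S - {l}) a b"
    show "covers S a b"
    proof (rule ccontr)
      assume "\<not> covers S a b"
      with cov ab have "a < l" "l < b"
        unfolding covers_def by auto
      then obtain w w' where "covers S w l" "covers S l w'"
        using exists_covers_below[of S a l] exists_covers_above[of S l b] assms(1,2) ab
        unfolding terminal_point_def by blast
      then have "w \<in> {t\<in>S. hasse_adj S l t}" "w' \<in> {t\<in>S. hasse_adj S l t}" "w \<noteq> w'"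
        by (auto simp: covers_def hasse_adj_def)
      then show False
        using assms(1,2) card_le_Suc0_iff_eq[of "{t\<in>S. hasse_adj S l t}"]
        unfolding terminal_point_def hasse_degree_def by auto
    qed
  qed (use ab in \<open>auto simp: covers_def\<close>)
  show ?thesis
    unfolding hasse_adj_def using covers_iff assms(3,4) by blast
qed

lemma comparable_dual_iff: "comparable (dual s) (dual t) \<longleftrightarrow> comparable s t"
  unfolding comparable_def by auto

lemma covers_dual_iff: "covers (dual ` S) (dual s) (dual t) \<longleftrightarrow> covers S t s"
  unfolding covers_def by auto

lemma hasse_adj_dual_iff: "hasse_adj (dual ` S) (dual s) (dual t) \<longleftrightarrow> hasse_adj S s t"
  unfolding hasse_adj_def covers_dual_iff by blast

lemma comparable_hasse_leaf_below:
  assumes fin: "finite S" and in_S: "x \<in> S" "v \<in> S" "v \<noteq> x"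
    and x_adj: "\<forall>t\<in>S. hasse_adj S x t \<longleftrightarrow> t = p" and "x < p"
  shows "comparable x v \<longleftrightarrow> p \<le> v"
proof -
  have "\<not> v < x"
  proof
    assume "v < x"
    then obtain w where "w \<in> S" "covers S w x"
      using exists_covers_below[OF fin in_S(2,1)] by blast
    then have "w = p" "w < x"
      using x_adj covers_imp_hasse_adj by (auto simp: covers_def)
    with \<open>x < p\<close> show False by simp
  qed
  moreover have "x < v \<longleftrightarrow> p \<le> v"
  proof
    assume "x < v"
    then obtain w where "w \<in> S" "covers S x w" "w \<le> v"
      using exists_covers_above[OF fin in_S(1,2)] by blast
    then show "p \<le> v"
      using x_adj covers_imp_hasse_adj[of S x w] by auto
  qed (use \<open>x < p\<close> in auto)
  ultimately show ?thesis
    unfolding comparable_def by auto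
qed

lemma comparable_arm_leaf_below:
  fixes x p q :: "'a::order"
  assumes fin: "finite S" and in_S: "x \<in> S" "p \<in> S" "v \<in> S" "v \<noteq> x"
    and x_adj: "\<forall>t\<in>S. hasse_adj S x t \<longleftrightarrow> t = p"
    and p_adj: "\<forall>t\<in>S. hasse_adj S p t \<longleftrightarrow> t = x \<or> t = q"
    and "x < p"
  shows "comparable x v \<longleftrightarrow> v = p \<or> (p < q \<and> comparable p v)"
proof -
  have "p < v \<longleftrightarrow> p < q \<and> comparable p v"
  proof
    assume "p < v"
    then obtain w where "w \<in> S" "covers S p w"
      using exists_covers_above[OF fin in_S(2,3)] by blast
    then have "w = x \<or> w = q" "p < w"
      using p_adj covers_imp_hasse_adj by (auto simp: covers_def)
    with \<open>x < p\<close> \<open>p < v\<close> show "p < q \<and> comparable p v"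
      by (auto simp: comparable_def)
  next
    assume q_v: "p < q \<and> comparable p v"
    show "p < v"
    proof (rule ccontr)
      assume "\<not> p < v"
      with q_v have "v < p"
        by (simp add: comparable_def)
      then obtain w where "w \<in> S" "covers S w p" "v \<le> w"
        using exists_covers_below[OF fin in_S(3,2)] by blast
      then have "w = x \<or> w = q" "w < p"
        using p_adj covers_imp_hasse_adj by (auto simp: covers_def)
      with q_v \<open>v \<le> w\<close> \<open>v \<noteq> x\<close> have "v < x"
        by auto
      then show False
        using comparable_hasse_leaf_below[OF fin in_S(1,3,4) x_adj \<open>x < p\<close>] \<open>v < p\<close>
        by (auto simp: comparable_def)
    qed
  qed
  then show ?thesis
    using comparable_hasse_leaf_below[OF fin in_S(1,3,4) x_adj \<open>x < p\<close>] by auto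
qed

lemma comparable_arm_leaf:
  fixes x p q :: "'a::order"
  assumes fin: "finite S" and in_S: "x \<in> S" "p \<in> S" "q \<in> S" "v \<in> S" "v \<noteq> x"
    and x_adj: "\<forall>t\<in>S. hasse_adj S x t \<longleftrightarrow> t = p"
    and p_adj: "\<forall>t\<in>S. hasse_adj S p t \<longleftrightarrow> t = x \<or> t = q"
  shows "comparable x v \<longleftrightarrow> v = p \<or> ((x < p \<longleftrightarrow> p < q) \<and> comparable p v)"
proof -
  have "p < q \<or> q < p"
    using p_adj in_S hasse_adj_imp_less by blast
  have "x < p \<or> p < x"
    using x_adj in_S hasse_adj_imp_less by blast
  then show ?thesis
  proof
    assume "x < p"
    then show ?thesis
      using comparable_arm_leaf_below[OF fin in_S(1,2,4,5) x_adj p_adj] by auto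
  next
    assume "p < x"
    have "comparable (dual x) (dual v) \<longleftrightarrow>
        dual v = dual p \<or> (dual p < dual q \<and> comparable (dual p) (dual v))"
      by (rule comparable_arm_leaf_below[of "dual ` S"])
        (use fin in_S x_adj p_adj \<open>p < x\<close> in \<open>auto simp: hasse_adj_dual_iff\<close>)
    with \<open>p < x\<close> \<open>p < q \<or> q < p\<close> show ?thesis
      by (auto simp: comparable_dual_iff)
  qed
qed

section \<open>Extending Dynkin witnesses\<close>

text \<open>Besides the value c of the m-th derivative, the witness records its m-th coordinate
  \<delta>: extending a witness by a leaf needs both.\<close>

definition dynkin_witness :: "'a::order set \<Rightarrow> 'a \<Rightarrow> int \<Rightarrow> int \<Rightarrow> bool" where
  "dynkin_witness S m c \<delta> \<longleftrightarrow> (\<exists>d. (\<exists>i\<in>S. d i \<noteq> 0) \<and> dfS S d m = c \<and> d m = \<delta> \<and>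
     (\<forall>j\<in>S. j \<noteq> m \<longrightarrow> dfS S d j = 0))"

lemma dfS_cong: "(\<And>j. j \<in> S \<Longrightarrow> d j = d' j) \<Longrightarrow> v \<in> S \<Longrightarrow> dfS S d v = dfS S d' v"
  unfolding dfS_def by (auto intro!: sum.cong)

lemma dfS_uminus: "dfS S (\<lambda>j. - d j) v = - dfS S d v"
  unfolding dfS_def by (simp add: sum_negf)

lemma dfS_Diff:
  assumes "finite S" "x \<in> S" "v \<in> S - {x}"
  shows "dfS S d v = dfS (S - {x}) d v + (if comparable x v then d x else 0)"
proof -
  have "{j\<in>S. j \<noteq> v \<and> comparable j v} =
      {j\<in>S - {x}. j \<noteq> v \<and> comparable j v} \<union> (if comparable x v then {x} else {})"
    using assms(2,3) by (auto simp: comparable_sym)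
  then show ?thesis
    unfolding dfS_def using assms(1) by (simp add: sum.union_disjoint)
qed

lemma dynkin_witness_uminus: "dynkin_witness S m c \<delta> \<Longrightarrow> dynkin_witness S m (- c) (- \<delta>)"
  unfolding dynkin_witness_def
  by (metis (no_types, lifting) dfS_uminus equation_minus_iff neg_equal_0_iff_equal)

lemma dynkin_point_if_witness:
  assumes "dynkin_witness S m c \<delta>" "m \<in> S" "\<bar>c\<bar> \<le> 2"
  shows "dynkin_point S m"
proof -
  have "dynkin_witness S m \<bar>c\<bar> (if c \<ge> 0 then \<delta> else - \<delta>)"
    using assms(1) dynkin_witness_uminus[OF assms(1)] by (cases "c \<ge> 0") simp_all
  then obtain d where "\<exists>i\<in>S. d i \<noteq> 0" "dfS S d m = \<bar>c\<bar>" "\<forall>j\<in>S. j \<noteq> m \<longrightarrow> dfS S d j = 0"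
    unfolding dynkin_witness_def by blast
  with assms(2,3) show ?thesis
    unfolding dynkin_point_def by (intro conjI exI[of _ d]) auto
qed

lemma dynkin_witness_add_pendant:
  assumes fin: "finite S" and in_S: "x \<in> S" "p \<in> S - {x}"
    and comp_x: "\<forall>v\<in>S - {x}. comparable x v \<longleftrightarrow> v = p"
    and wit: "dynkin_witness (S - {x}) p c \<delta>"
  shows "dynkin_witness S x (2 * c - \<delta>) c"
proof -
  obtain d' where nz: "\<exists>i\<in>S - {x}. d' i \<noteq> 0" and at_p: "dfS (S - {x}) d' p = c" "d' p = \<delta>"
    and off_p: "\<forall>j\<in>S - {x}. j \<noteq> p \<longrightarrow> dfS (S - {x}) d' j = 0"
    using wit unfolding dynkin_witness_def by blast
  define d where "d y = (if y = x then c else - d' y)" for y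
  have "{j\<in>S. j \<noteq> x \<and> comparable j x} = {p}"
    using comp_x in_S by (auto simp: comparable_sym)
  then have "dfS S d x = 2 * c - \<delta>"
    using in_S at_p unfolding dfS_def d_def by simp
  moreover have "dfS S d v = 0" if v: "v \<in> S - {x}" for v
  proof -
    have "dfS (S - {x}) d v = - dfS (S - {x}) d' v"
      using dfS_cong[of "S - {x}" d "\<lambda>j. - d' j"] dfS_uminus v by (simp add: d_def)
    then show ?thesis
      using dfS_Diff[OF fin in_S(1) v, of d] comp_x at_p off_p v by (auto simp: d_def)
  qed
  moreover have "\<exists>i\<in>S. d i \<noteq> 0"
    using nz in_S(1) by (cases "c = 0") (auto simp: d_def)
  ultimately show ?thesis
    unfolding dynkin_witness_def by (intro exI[of _ d]) (auto simp: d_def)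
qed

lemma dynkin_witness_add_twin:
  assumes fin: "finite S" and in_S: "x \<in> S" "p \<in> S - {x}"
    and comp_x: "\<forall>v\<in>S - {x}. comparable x v \<longleftrightarrow> v = p \<or> comparable p v"
    and wit: "dynkin_witness (S - {x}) p c \<delta>"
  shows "dynkin_witness S x (2 * c - \<delta>) c"
proof -
  obtain d' where nz: "\<exists>i\<in>S - {x}. d' i \<noteq> 0" and at_p: "dfS (S - {x}) d' p = c" "d' p = \<delta>"
    and off_p: "\<forall>j\<in>S - {x}. j \<noteq> p \<longrightarrow> dfS (S - {x}) d' j = 0"
    using wit unfolding dynkin_witness_def by blast
  define d where "d y = (if y = x then c else if y = p then d' p - c else d' y)" for y
  let ?N = "\<lambda>v. {j\<in>S - {x}. j \<noteq> v \<and> comparable j v}"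
  have sum_N: "(\<Sum>j\<in>?N v. d j) = (\<Sum>j\<in>?N v. d' j) - (if comparable p v then c else 0)"
    if "v \<in> S - {x}" for v
  proof -
    have "(\<Sum>j\<in>?N v. d j) = (\<Sum>j\<in>?N v. d' j - (if j = p then c else 0))"
      by (rule sum.cong) (auto simp: d_def)
    also have "\<dots> = (\<Sum>j\<in>?N v. d' j) - (if p \<in> ?N v then c else 0)"
      using fin by (simp add: sum_subtractf)
    finally show ?thesis
      using in_S(2) by (auto simp: comparable_def)
  qed
  have "{j\<in>S. j \<noteq> x \<and> comparable j x} = insert p (?N p)"
    using comp_x in_S by (auto simp: comparable_sym)
  then have "dfS S d x = 2 * c + d p + (\<Sum>j\<in>?N p. d j)"
    using fin unfolding dfS_def by (simp add: d_def)
  also have "\<dots> = 2 * c - \<delta>"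
    using sum_N[OF in_S(2)] at_p in_S unfolding dfS_def by (simp add: d_def)
  finally have "dfS S d x = 2 * c - \<delta>" .
  moreover have "dfS S d v = 0" if v: "v \<in> S - {x}" for v
  proof -
    have "dfS S d v = 2 * d v + (\<Sum>j\<in>?N v. d' j) - (if comparable p v then c else 0)
        + (if comparable x v then c else 0)"
      using dfS_Diff[OF fin in_S(1) v, of d] sum_N[OF v] unfolding dfS_def by (simp add: d_def)
    then show ?thesis
      using comp_x at_p off_p v unfolding dfS_def by (auto simp: d_def)
  qed
  moreover have "\<exists>i\<in>S. d i \<noteq> 0"
    using nz in_S(1) by (cases "c = 0") (auto simp: d_def)
  ultimately show ?thesis
    unfolding dynkin_witness_def by (intro exI[of _ d]) (auto simp: d_def)
qed

lemma dynkin_witness_add_hasse_leaf: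
  assumes fin: "finite S" and in_S: "x \<in> S" "p \<in> S" "q \<in> S"
    and x_adj: "\<forall>t\<in>S. hasse_adj S x t \<longleftrightarrow> t = p"
    and p_adj: "\<forall>t\<in>S. hasse_adj S p t \<longleftrightarrow> t = x \<or> t = q"
    and wit: "dynkin_witness (S - {x}) p c \<delta>"
  shows "dynkin_witness S x (2 * c - \<delta>) c"
proof -
  have "p \<noteq> x"
    using x_adj in_S(2) hasse_adj_imp_less by blast
  then have p: "p \<in> S - {x}"
    using in_S(2) by simp
  have comp_x: "\<forall>v\<in>S - {x}. comparable x v \<longleftrightarrow> v = p \<or> ((x < p \<longleftrightarrow> p < q) \<and> comparable p v)"
    using comparable_arm_leaf[OF fin in_S] x_adj p_adj by blast
  show ?thesis
  proof (cases "x < p \<longleftrightarrow> p < q")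
    case True
    then show ?thesis
      using dynkin_witness_add_twin[OF fin in_S(1) p _ wit] comp_x by simp
  next
    case False
    then show ?thesis
      using dynkin_witness_add_pendant[OF fin in_S(1) p _ wit] comp_x by simp
  qed
qed

section \<open>Labelled Hasse graphs\<close>

definition hasse_labelling :: "'a::order set \<Rightarrow> ('a \<Rightarrow> nat) \<Rightarrow> nat set \<Rightarrow> (nat \<times> nat) set \<Rightarrow> bool" where
  "hasse_labelling S \<phi> V E \<longleftrightarrow>
     bij_betw \<phi> S V \<and> (\<forall>x\<in>S. \<forall>y\<in>S. hasse_adj S x y \<longleftrightarrow> graph_adj E (\<phi> x) (\<phi> y))"

lemma hasse_iso_iff_labelling: "hasse_iso S (n, E) \<longleftrightarrow> (\<exists>\<phi>. hasse_labelling S \<phi> {..<n} E)"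
  unfolding hasse_iso_def hasse_labelling_def by simp

lemma graph_adj_sym: "graph_adj E i j \<longleftrightarrow> graph_adj E j i"
  unfolding graph_adj_def by auto

lemma hasse_labelling_relabel:
  assumes "hasse_labelling S \<phi> V E" "bij_betw \<sigma> V W"
    and "\<forall>i\<in>V. \<forall>j\<in>V. graph_adj E i j \<longleftrightarrow> graph_adj E' (\<sigma> i) (\<sigma> j)"
  shows "hasse_labelling S (\<sigma> \<circ> \<phi>) W E'"
proof -
  have bij: "bij_betw \<phi> S V" and adj: "\<forall>x\<in>S. \<forall>y\<in>S. hasse_adj S x y \<longleftrightarrow> graph_adj E (\<phi> x) (\<phi> y)"
    using assms(1) unfolding hasse_labelling_def by simp_all
  have "hasse_adj S x y \<longleftrightarrow> graph_adj E' (\<sigma> (\<phi> x)) (\<sigma> (\<phi> y))" if "x \<in> S" "y \<in> S" for x y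
    using adj assms(3) bij_betw_apply[OF bij] that by blast
  then show ?thesis
    using bij_betw_trans[OF bij assms(2)] unfolding hasse_labelling_def by simp
qed

lemma terminal_point_if_leaf_label:
  assumes lab: "hasse_labelling S \<phi> V E" and "x \<in> S"
    and leaf: "\<forall>v\<in>V. graph_adj E (\<phi> x) v \<longrightarrow> v = k"
  shows "terminal_point S x"
proof -
  let ?K = "{t\<in>S. \<phi> t = k}"
  have inj: "inj_on \<phi> ?K"
    using lab unfolding hasse_labelling_def bij_betw_def by (auto intro: inj_on_subset)
  moreover have "\<phi> ` ?K \<subseteq> {k}"
    by auto
  ultimately have "finite ?K" "card ?K \<le> 1"
    using card_image[OF inj] card_mono[of "{k}" "\<phi> ` ?K"] finite_imageD[OF _ inj]
    by (auto intro: finite_subset)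
  moreover have "{t\<in>S. hasse_adj S x t} \<subseteq> ?K"
  proof
    fix t
    assume "t \<in> {t\<in>S. hasse_adj S x t}"
    then have "t \<in> S" "graph_adj E (\<phi> x) (\<phi> t)" "\<phi> t \<in> V"
      using lab \<open>x \<in> S\<close> bij_betw_apply unfolding hasse_labelling_def by auto
    with leaf show "t \<in> ?K"
      by simp
  qed
  ultimately have "card {t\<in>S. hasse_adj S x t} \<le> 1"
    using card_mono[of ?K] order.trans by blast
  then show ?thesis
    using \<open>x \<in> S\<close> unfolding terminal_point_def hasse_degree_def by simp
qed

lemma terminal_dynkin_point_if_witness_label:
  fixes S :: "'a::order set"
  assumes iso: "hasse_iso S (N, E)" and "i < N" and leaf: "\<forall>v<N. graph_adj E i v \<longrightarrow> v = k"
    and wit: "\<And>\<phi> x. hasse_labelling S \<phi> {..<N} E \<Longrightarrow> x \<in> S \<Longrightarrow> \<phi> x = i \<Longrightarrow> dynkin_witness S x c \<delta>"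
    and "\<bar>c\<bar> \<le> 2"
  shows "\<exists>s\<in>S. terminal_point S s \<and> dynkin_point S s"
proof -
  obtain \<phi> where lab: "hasse_labelling S \<phi> {..<N} E"
    using iso hasse_iso_iff_labelling by blast
  then have "i \<in> \<phi> ` S"
    using \<open>i < N\<close> bij_betw_imp_surj_on unfolding hasse_labelling_def by blast
  then obtain x where x: "x \<in> S" "\<phi> x = i"
    by blast
  have "terminal_point S x"
    using terminal_point_if_leaf_label[OF lab x(1), of k] leaf x(2) by simp
  moreover have "dynkin_point S x"
    using dynkin_point_if_witness[OF wit[OF lab x] x(1) \<open>\<bar>c\<bar> \<le> 2\<close>] .
  ultimately show ?thesis
    using x(1) by blast
qed

lemma hasse_labelling_Diff_leaf:
  assumes fin: "finite V" and lab: "hasse_labelling S \<phi> V E" and x: "x \<in> S"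
    and leaf: "\<forall>v\<in>V. graph_adj E (\<phi> x) v \<longrightarrow> v = k"
  shows "hasse_labelling (S - {x}) \<phi> (V - {\<phi> x}) E"
proof -
  have bij: "bij_betw \<phi> S V"
    using lab unfolding hasse_labelling_def by simp
  then have "finite S"
    using fin bij_betw_finite by blast
  have "bij_betw \<phi> (S - {x}) (V - {\<phi> x})"
    using bij_betw_DiffI[OF bij, of "{x}" "{\<phi> x}"] x bij_betw_apply[OF bij x] by simp
  moreover have "hasse_adj (S - {x}) y z \<longleftrightarrow> hasse_adj S y z" if "y \<in> S - {x}" "z \<in> S - {x}" for y z
    using hasse_adj_Diff_terminal_point[OF \<open>finite S\<close> terminal_point_if_leaf_label[OF lab x leaf]] that
    by blast
  ultimately show ?thesis
    using lab unfolding hasse_labelling_def by simp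
qed

lemma dynkin_witness_add_leaf_label:
  fixes S :: "'a::order set"
  assumes fin: "finite V" and in_V: "k \<in> V" "r \<in> V"
    and i_adj: "\<forall>v\<in>V. graph_adj E i v \<longleftrightarrow> v = k"
    and k_adj: "\<forall>v\<in>V. graph_adj E k v \<longleftrightarrow> v = i \<or> v = r"
    and wit: "\<And>(S' :: 'a set) \<phi>' y. hasse_labelling S' \<phi>' (V - {i}) E \<Longrightarrow> y \<in> S' \<Longrightarrow> \<phi>' y = k \<Longrightarrow>
      dynkin_witness S' y c \<delta>"
    and lab: "hasse_labelling S \<phi> V E" and x: "x \<in> S" "\<phi> x = i"
  shows "dynkin_witness S x (2 * c - \<delta>) c"
proof -
  have bij: "bij_betw \<phi> S V" and adj: "\<forall>y\<in>S. \<forall>z\<in>S. hasse_adj S y z \<longleftrightarrow> graph_adj E (\<phi> y) (\<phi> z)"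
    using lab unfolding hasse_labelling_def by simp_all
  obtain p q where pq: "p \<in> S" "\<phi> p = k" "q \<in> S" "\<phi> q = r"
    using in_V bij_betw_imp_surj_on[OF bij] by (metis imageE)
  have label_eq: "y = z \<longleftrightarrow> \<phi> y = \<phi> z" if "y \<in> S" "z \<in> S" for y z
    using bij that unfolding bij_betw_def inj_on_def by blast
  have labels: "\<phi> t \<in> V" if "t \<in> S" for t
    using bij_betw_apply[OF bij that] .
  have x_adj: "\<forall>t\<in>S. hasse_adj S x t \<longleftrightarrow> t = p"
    using adj i_adj x pq label_eq labels by auto
  have p_adj: "\<forall>t\<in>S. hasse_adj S p t \<longleftrightarrow> t = x \<or> t = q"
    using adj k_adj x pq label_eq labels by auto
  have "hasse_labelling (S - {x}) \<phi> (V - {i}) E"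
    using hasse_labelling_Diff_leaf[OF fin lab x(1)] i_adj x(2) by blast
  moreover have "p \<in> S - {x}"
    using x_adj pq(1) hasse_adj_imp_less by blast
  ultimately have "dynkin_witness (S - {x}) p c \<delta>"
    using wit[of "S - {x}" \<phi> p] pq(2) by simp
  then show ?thesis
    using dynkin_witness_add_hasse_leaf[OF _ x(1) pq(1,3) x_adj p_adj] bij fin bij_betw_finite
    by blast
qed

text \<open>The vertex a 0 of V0 carries a path a 1, ..., a L outside V0.\<close>

definition graph_arm :: "(nat \<times> nat) set \<Rightarrow> nat set \<Rightarrow> (nat \<Rightarrow> nat) \<Rightarrow> nat \<Rightarrow> bool" where
  "graph_arm E V\<^sub>0 a L \<longleftrightarrow> inj_on a {0..L} \<and> (\<forall>j\<in>{1..L}. a j \<notin> V\<^sub>0) \<and>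
     (\<forall>j\<in>{1..L}. \<forall>v\<in>V\<^sub>0 \<union> a ` {1..L}.
        graph_adj E (a j) v \<longleftrightarrow> v = a (j - 1) \<or> (j < L \<and> v = a (j + 1)))"

lemma graph_arm_SucD:
  assumes "graph_arm E V\<^sub>0 a (Suc L)"
  shows "graph_arm E V\<^sub>0 a L" and "a (Suc L) \<notin> V\<^sub>0 \<union> a ` {1..L}"
proof -
  show tip_fresh: "a (Suc L) \<notin> V\<^sub>0 \<union> a ` {1..L}"
    using assms unfolding graph_arm_def by (force simp: inj_on_def)
  have "graph_adj E (a j) v \<longleftrightarrow> v = a (j - 1) \<or> (j < L \<and> v = a (j + 1))"
    if j: "j \<in> {1..L}" and v: "v \<in> V\<^sub>0 \<union> a ` {1..L}" for j v
  proof -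
    have "j \<in> {1..Suc L}" "v \<in> V\<^sub>0 \<union> a ` {1..Suc L}"
      using j v by auto
    then have "graph_adj E (a j) v \<longleftrightarrow> v = a (j - 1) \<or> (j < Suc L \<and> v = a (j + 1))"
      using assms unfolding graph_arm_def by blast
    moreover have "v \<noteq> a (Suc L)"
      using v tip_fresh by blast
    ultimately show ?thesis
      by (cases "j = L") auto
  qed
  then show "graph_arm E V\<^sub>0 a L"
    using assms unfolding graph_arm_def by (auto intro: inj_on_subset)
qed

lemma graph_arm_adj_iff:
  assumes arm: "graph_arm E V\<^sub>0 a L" and base_in: "a 0 \<in> V\<^sub>0" "r \<in> V\<^sub>0"
    and base_adj: "\<forall>v\<in>V\<^sub>0. graph_adj E (a 0) v \<longleftrightarrow> v = r"
    and k: "k \<le> L" and v: "v \<in> V\<^sub>0 \<union> a ` {1..L}"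
  shows "graph_adj E (a k) v \<longleftrightarrow> v = (if k = 0 then r else a (k - 1)) \<or> (k < L \<and> v = a (k + 1))"
proof (cases "k = 0")
  case False
  then show ?thesis
    using arm k v unfolding graph_arm_def by auto
next
  case True
  have inj: "inj_on a {0..L}" and fresh: "\<forall>j\<in>{1..L}. a j \<notin> V\<^sub>0"
    using arm unfolding graph_arm_def by simp_all
  show ?thesis
  proof (cases "v \<in> V\<^sub>0")
    case True
    then have "0 < L \<longrightarrow> v \<noteq> a 1"
      using fresh by auto
    with True \<open>k = 0\<close> show ?thesis
      using base_adj by auto
  next
    case False
    with v obtain j where j: "j \<in> {1..L}" "v = a j"
      by blast
    have "graph_adj E (a j) (a 0) \<longleftrightarrow> a 0 = a (j - 1) \<or> (j < L \<and> a 0 = a (j + 1))"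
      using arm j base_in(1) unfolding graph_arm_def by blast
    also have "\<dots> \<longleftrightarrow> j = 1"
      using j by (auto simp: inj_on_eq_iff[OF inj])
    finally show ?thesis
      using \<open>k = 0\<close> j fresh base_in(2) inj graph_adj_sym[of E "a 0"] by (auto simp: inj_on_def)
  qed
qed

lemma dynkin_witness_along_arm:
  fixes S :: "'a::order set" and a :: "nat \<Rightarrow> nat"
  assumes fin: "finite V\<^sub>0" and base_in: "a 0 \<in> V\<^sub>0" "r \<in> V\<^sub>0"
    and base_adj: "\<forall>v\<in>V\<^sub>0. graph_adj E (a 0) v \<longleftrightarrow> v = r"
    and base: "\<And>(S' :: 'a set) \<phi>' y. hasse_labelling S' \<phi>' V\<^sub>0 E \<Longrightarrow> y \<in> S' \<Longrightarrow> \<phi>' y = a 0 \<Longrightarrow>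
      dynkin_witness S' y c \<delta>"
    and arm: "graph_arm E V\<^sub>0 a L"
    and lab: "hasse_labelling S \<phi> (V\<^sub>0 \<union> a ` {1..L}) E" and x: "x \<in> S" "\<phi> x = a L"
  shows "dynkin_witness S x (c + int L * (c - \<delta>)) (c + (int L - 1) * (c - \<delta>))"
  using arm lab x
proof (induction L arbitrary: S \<phi> x)
  case 0
  then show ?case
    using base by simp
next
  case (Suc L)
  let ?V = "V\<^sub>0 \<union> a ` {1..Suc L}" and ?r = "if L = 0 then r else a (L - 1)"
  note shorter = graph_arm_SucD[OF Suc.prems(1)]
  have adj: "graph_adj E (a k) v \<longleftrightarrow> v = (if k = 0 then r else a (k - 1)) \<or> (k < Suc L \<and> v = a (k + 1))"
    if "k \<le> Suc L" "v \<in> ?V" for k v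
    using graph_arm_adj_iff[OF Suc.prems(1) base_in base_adj that] .
  have "?V - {a (Suc L)} = V\<^sub>0 \<union> a ` {1..L}"
    using shorter(2) by (auto simp: atLeastAtMostSuc_conv)
  then have IH: "dynkin_witness S' y (c + int L * (c - \<delta>)) (c + (int L - 1) * (c - \<delta>))"
    if "hasse_labelling S' \<phi>' (?V - {a (Suc L)}) E" "y \<in> S'" "\<phi>' y = a L" for S' :: "'a set" and \<phi>' y
    using Suc.IH[OF shorter(1)] that by simp
  have "a j \<in> ?V" if "j \<le> Suc L" for j
    using base_in that by (cases j) auto
  then have in_V: "a L \<in> ?V" "?r \<in> ?V"
    using base_in by auto
  have i_adj: "\<forall>v\<in>?V. graph_adj E (a (Suc L)) v \<longleftrightarrow> v = a L"
    using adj[of "Suc L"] by simp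
  have k_adj: "\<forall>v\<in>?V. graph_adj E (a L) v \<longleftrightarrow> v = a (Suc L) \<or> v = ?r"
    using adj[of L] by auto
  have "dynkin_witness S x (2 * (c + int L * (c - \<delta>)) - (c + (int L - 1) * (c - \<delta>)))
      (c + int L * (c - \<delta>))"
    by (rule dynkin_witness_add_leaf_label[OF _ in_V i_adj k_adj IH Suc.prems(2-4)]) (use fin in simp)
  then show ?case
    by (simp add: algebra_simps)
qed

section \<open>Small trees by enumeration of orientations\<close>

fun orientations :: "(nat \<times> nat) list \<Rightarrow> (nat \<times> nat) list list" where
  "orientations [] = [[]]"
| "orientations (e # es) = [e' # os. e' \<leftarrow> [e, prod.swap e], os \<leftarrow> orientations es]"

definition label_order :: "'a::order set \<Rightarrow> ('a \<Rightarrow> nat) \<Rightarrow> (nat \<times> nat) set" where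
  "label_order S \<phi> = {(\<phi> a, \<phi> b) | a b. a \<in> S \<and> b \<in> S \<and> a < b}"

definition label_orientation :: "'a::order set \<Rightarrow> ('a \<Rightarrow> nat) \<Rightarrow> (nat \<times> nat) list \<Rightarrow> (nat \<times> nat) list" where
  "label_orientation S \<phi> es = map (\<lambda>e. if e \<in> label_order S \<phi> then e else prod.swap e) es"

lemma label_orientation_in_orientations: "label_orientation S \<phi> es \<in> set (orientations es)"
  unfolding label_orientation_def by (induction es) auto

lemma label_order_iff:
  assumes "inj_on \<phi> S" "a \<in> S" "b \<in> S"
  shows "(\<phi> a, \<phi> b) \<in> label_order S \<phi> \<longleftrightarrow> a < b"
  using assms unfolding label_order_def inj_on_def by blast

lemma set_label_orientation_subset:
  assumes lab: "hasse_labelling S \<phi> {..<n} (set es)" and edges: "\<forall>(i, j)\<in>set es. i < n \<and> j < n"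
  shows "set (label_orientation S \<phi> es) \<subseteq> label_order S \<phi>"
proof
  have bij: "bij_betw \<phi> S {..<n}" and adj: "\<forall>y\<in>S. \<forall>z\<in>S. hasse_adj S y z \<longleftrightarrow> graph_adj (set es) (\<phi> y) (\<phi> z)"
    using lab unfolding hasse_labelling_def by simp_all
  fix e
  assume "e \<in> set (label_orientation S \<phi> es)"
  then obtain e\<^sub>0 where "e\<^sub>0 \<in> set es" "e = (if e\<^sub>0 \<in> label_order S \<phi> then e\<^sub>0 else prod.swap e\<^sub>0)"
    unfolding label_orientation_def set_map by blast
  moreover obtain i j where "e\<^sub>0 = (i, j)"
    by fastforce
  ultimately have ij: "(i, j) \<in> set es" "e = (if (i, j) \<in> label_order S \<phi> then (i, j) else (j, i))"
    by auto
  moreover have "i \<in> \<phi> ` S" "j \<in> \<phi> ` S"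
    using edges ij(1) bij_betw_imp_surj_on[OF bij] by auto
  then obtain y z where "y \<in> S" "z \<in> S" "i = \<phi> y" "j = \<phi> z"
    by blast
  moreover from calculation have "y < z \<or> z < y"
    using adj hasse_adj_imp_less unfolding graph_adj_def by blast
  ultimately show "e \<in> label_order S \<phi>"
    unfolding label_order_def by auto
qed

lemma covers_in_label_orientation:
  assumes lab: "hasse_labelling S \<phi> V (set es)" and "covers S a b"
  shows "(\<phi> a, \<phi> b) \<in> set (label_orientation S \<phi> es)"
proof -
  have inj: "inj_on \<phi> S" and adj: "\<forall>y\<in>S. \<forall>z\<in>S. hasse_adj S y z \<longleftrightarrow> graph_adj (set es) (\<phi> y) (\<phi> z)"
    using lab unfolding hasse_labelling_def bij_betw_def by simp_all
  have cov: "a \<in> S" "b \<in> S" "a < b" "hasse_adj S a b"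
    using assms(2) covers_imp_hasse_adj by (auto simp: covers_def)
  then have "(\<phi> a, \<phi> b) \<in> label_order S \<phi>" "(\<phi> b, \<phi> a) \<notin> label_order S \<phi>"
    using label_order_iff[OF inj] by auto
  moreover have "(\<phi> a, \<phi> b) \<in> set es \<or> (\<phi> b, \<phi> a) \<in> set es"
    using adj cov unfolding graph_adj_def by blast
  ultimately show ?thesis
    unfolding label_orientation_def by force
qed

lemma trancl_label_orientation:
  fixes S :: "'a::order set"
  assumes lab: "hasse_labelling S \<phi> {..<n} (set es)" and edges: "\<forall>(i, j)\<in>set es. i < n \<and> j < n"
  shows "(set (label_orientation S \<phi> es))\<^sup>+ = label_order S \<phi>"
proof
  have bij: "bij_betw \<phi> S {..<n}"
    using lab unfolding hasse_labelling_def by simp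
  then have "trans (label_order S \<phi>)"
    using bij_betw_imp_inj_on unfolding label_order_def trans_def inj_on_def
    by (blast intro: order.strict_trans)
  then show "(set (label_orientation S \<phi> es))\<^sup>+ \<subseteq> label_order S \<phi>"
    using trancl_mono_subset[OF set_label_orientation_subset[OF lab edges]] trancl_id by metis
  have "(\<phi> a, \<phi> b) \<in> (set (label_orientation S \<phi> es))\<^sup>+"
    if "(a, b) \<in> {(a, b). covers S a b}\<^sup>+" for a b
    using that by (induction rule: trancl_induct)
      (blast intro: covers_in_label_orientation[OF lab] trancl_into_trancl)+
  then show "label_order S \<phi> \<subseteq> (set (label_orientation S \<phi> es))\<^sup>+"
    using less_iff_trancl_covers bij_betw_finite[OF bij] unfolding label_order_def by blast
qed

lemma dfS_label_order:
  assumes bij: "bij_betw \<phi> S {..<n}" and y: "y \<in> S"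
  shows "dfS S (\<lambda>z. d ! \<phi> z) y = 2 * d ! \<phi> y +
    (\<Sum>u<n. if (u, \<phi> y) \<in> label_order S \<phi> \<or> (\<phi> y, u) \<in> label_order S \<phi> then d ! u else 0)"
proof -
  have inj: "inj_on \<phi> S" and fin: "finite S"
    using bij_betw_imp_inj_on[OF bij] bij_betw_finite[OF bij] by auto
  have "(\<Sum>u<n. if (u, \<phi> y) \<in> label_order S \<phi> \<or> (\<phi> y, u) \<in> label_order S \<phi> then d ! u else 0)
      = (\<Sum>z\<in>S. if (\<phi> z, \<phi> y) \<in> label_order S \<phi> \<or> (\<phi> y, \<phi> z) \<in> label_order S \<phi> then d ! \<phi> z else 0)"
    by (rule sum.reindex_bij_betw[OF bij, symmetric])
  also have "\<dots> = (\<Sum>z\<in>S. if comparable z y then d ! \<phi> z else 0)"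
    using label_order_iff[OF inj] y by (intro sum.cong) (auto simp: comparable_def)
  also have "\<dots> = (\<Sum>z\<in>{j\<in>S. comparable j y}. d ! \<phi> z)"
    using fin by (simp add: sum.inter_filter)
  also have "{j\<in>S. comparable j y} = {j\<in>S. j \<noteq> y \<and> comparable j y}"
    by auto
  finally show ?thesis
    unfolding dfS_def by simp
qed

definition comparability_witness :: "nat \<Rightarrow> (nat \<times> nat) set \<Rightarrow> nat \<Rightarrow> int \<Rightarrow> int \<Rightarrow> int list \<Rightarrow> bool" where
  "comparability_witness n C m c \<delta> d \<longleftrightarrow> d ! m = \<delta> \<and> (\<exists>v<n. d ! v \<noteq> 0) \<and>
     (\<forall>v<n. 2 * d ! v + (\<Sum>u<n. if (u, v) \<in> C \<or> (v, u) \<in> C then d ! u else 0) = (if v = m then c else 0))"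

text \<open>Every poset whose Hasse graph is the tree es is the transitive closure of one of its
  orientations, so one row per orientation covers all of them.\<close>

definition witness_table :: "nat \<Rightarrow> (nat \<times> nat) list \<Rightarrow> nat \<Rightarrow> int \<Rightarrow> int \<Rightarrow> int list list \<Rightarrow> bool" where
  "witness_table n es m c \<delta> ds \<longleftrightarrow> (\<forall>(i, j)\<in>set es. i < n \<and> j < n) \<and>
     list_all2 (\<lambda>os d. comparability_witness n ((set os)\<^sup>+) m c \<delta> d) (orientations es) ds"

lemma dynkin_witness_if_witness_table:
  fixes S :: "'a::order set"
  assumes tab: "witness_table n es m c \<delta> ds" and lab: "hasse_labelling S \<phi> {..<n} (set es)"
    and x: "x \<in> S" "\<phi> x = m"
  shows "dynkin_witness S x c \<delta>"
proof -
  have bij: "bij_betw \<phi> S {..<n}"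
    using lab unfolding hasse_labelling_def by simp
  let ?os = "label_orientation S \<phi> es"
  have "?os \<in> set (orientations es)"
    by (rule label_orientation_in_orientations)
  then obtain k where k: "k < length (orientations es)" "orientations es ! k = ?os"
    unfolding in_set_conv_nth by blast
  have edges: "\<forall>(i, j)\<in>set es. i < n \<and> j < n"
    and all: "list_all2 (\<lambda>os d. comparability_witness n ((set os)\<^sup>+) m c \<delta> d) (orientations es) ds"
    using tab unfolding witness_table_def by simp_all
  have "comparability_witness n ((set ?os)\<^sup>+) m c \<delta> (ds ! k)"
    using list_all2_nthD[OF all k(1)] unfolding k(2) .
  then have wit: "comparability_witness n (label_order S \<phi>) m c \<delta> (ds ! k)"
    unfolding trancl_label_orientation[OF lab edges] .
  define d where "d z = ds ! k ! \<phi> z" for z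
  have labels: "\<phi> z < n" if "z \<in> S" for z
    using bij_betw_apply[OF bij that] by simp
  have label_m: "\<phi> z = m \<longleftrightarrow> z = x" if "z \<in> S" for z
    using x that bij_betw_imp_inj_on[OF bij] unfolding inj_on_def by auto
  have "dfS S d z = (if z = x then c else 0)" if "z \<in> S" for z
    using wit dfS_label_order[OF bij that] labels[OF that] label_m[OF that]
    unfolding comparability_witness_def d_def by simp
  moreover have "\<exists>z\<in>S. d z \<noteq> 0"
  proof -
    obtain v where "v < n" "ds ! k ! v \<noteq> 0"
      using wit unfolding comparability_witness_def by blast
    moreover obtain z where "z \<in> S" "\<phi> z = v"
      using bij_betw_imp_surj_on[OF bij] \<open>v < n\<close> by (metis imageE lessThan_iff)
    ultimately show ?thesis
      unfolding d_def by blast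
  qed
  moreover have "d x = \<delta>"
    using wit x unfolding comparability_witness_def d_def by simp
  ultimately show ?thesis
    using x(1) unfolding dynkin_witness_def by (intro exI[of _ d]) auto
qed

text \<open>The rows were obtained by solving B d = c e_m for each orientation; here they are
  only checked.\<close>

lemma witness_table_D4:
  "witness_table 4 [(0, 1), (1, 2), (1, 3)] 0 2 2
    [[2, 0, -1, -1],
     [2, -1, -1, 1],
     [2, -1, 1, -1],
     [2, -2, 1, 1],
     [2, -2, 1, 1],
     [2, -1, 1, -1],
     [2, -1, -1, 1],
     [2, 0, -1, -1]]"
  by code_simp

lemma witness_table_D5:
  "witness_table 5 [(0, 1), (1, 2), (2, 3), (2, 4)] 3 4 5
    [[-2, -2, -2, 5, 3],
     [-2, -2, 1, 5, -3],
     [2, 2, -3, 5, -3],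
     [2, 2, -6, 5, 3],
     [-2, 4, -6, 5, 3],
     [-2, 4, -3, 5, -3],
     [2, -4, 1, 5, -3],
     [2, -4, -2, 5, 3],
     [2, -4, -2, 5, 3],
     [2, -4, 1, 5, -3],
     [-2, 4, -3, 5, -3],
     [-2, 4, -6, 5, 3],
     [2, 2, -6, 5, 3],
     [2, 2, -3, 5, -3],
     [-2, -2, 1, 5, -3],
     [-2, -2, -2, 5, 3]]"
  by code_simp

lemma witness_table_D6:
  "witness_table 6 [(0, 1), (1, 2), (2, 3), (3, 4), (3, 5)] 4 2 3
    [[-1, -1, -1, -1, 3, 2],
     [-1, -1, -1, 1, 3, -2],
     [1, 1, 1, -2, 3, -2],
     [1, 1, 1, -4, 3, 2],
     [-1, -1, 3, -4, 3, 2],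
     [-1, -1, 3, -2, 3, -2],
     [1, 1, -3, 1, 3, -2],
     [1, 1, -3, -1, 3, 2],
     [-1, 2, -3, -1, 3, 2],
     [-1, 2, -3, 1, 3, -2],
     [1, -2, 3, -2, 3, -2],
     [1, -2, 3, -4, 3, 2],
     [-1, 2, 1, -4, 3, 2],
     [-1, 2, 1, -2, 3, -2],
     [1, -2, -1, 1, 3, -2],
     [1, -2, -1, -1, 3, 2],
     [1, -2, -1, -1, 3, 2],
     [1, -2, -1, 1, 3, -2],
     [-1, 2, 1, -2, 3, -2],
     [-1, 2, 1, -4, 3, 2],
     [1, -2, 3, -4, 3, 2],
     [1, -2, 3, -2, 3, -2],
     [-1, 2, -3, 1, 3, -2],
     [-1, 2, -3, -1, 3, 2],
     [1, 1, -3, -1, 3, 2],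
     [1, 1, -3, 1, 3, -2],
     [-1, -1, 3, -2, 3, -2],
     [-1, -1, 3, -4, 3, 2],
     [1, 1, 1, -4, 3, 2],
     [1, 1, 1, -2, 3, -2],
     [-1, -1, -1, 1, 3, -2],
     [-1, -1, -1, -1, 3, 2]]"
  by code_simp

lemma witness_table_E6:
  "witness_table 6 [(0, 1), (1, 2), (2, 3), (3, 4), (2, 5)] 5 1 2
    [[-1, -1, -1, 1, 1, 2],
     [1, 1, -1, -1, -1, 2],
     [-1, -1, -1, 2, -1, 2],
     [1, 1, -1, -2, 1, 2],
     [-1, -1, 1, -2, 1, 2],
     [1, 1, -3, 2, -1, 2],
     [-1, -1, 1, -1, -1, 2],
     [1, 1, -3, 1, 1, 2],
     [-1, 2, -3, 1, 1, 2],
     [1, -2, 1, -1, -1, 2],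
     [-1, 2, -3, 2, -1, 2],
     [1, -2, 1, -2, 1, 2],
     [-1, 2, -1, -2, 1, 2],
     [1, -2, -1, 2, -1, 2],
     [-1, 2, -1, -1, -1, 2],
     [1, -2, -1, 1, 1, 2],
     [1, -2, -1, 1, 1, 2],
     [-1, 2, -1, -1, -1, 2],
     [1, -2, -1, 2, -1, 2],
     [-1, 2, -1, -2, 1, 2],
     [1, -2, 1, -2, 1, 2],
     [-1, 2, -3, 2, -1, 2],
     [1, -2, 1, -1, -1, 2],
     [-1, 2, -3, 1, 1, 2],
     [1, 1, -3, 1, 1, 2],
     [-1, -1, 1, -1, -1, 2],
     [1, 1, -3, 2, -1, 2],
     [-1, -1, 1, -2, 1, 2],
     [1, 1, -1, -2, 1, 2],
     [-1, -1, -1, 2, -1, 2],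
     [1, 1, -1, -1, -1, 2],
     [-1, -1, -1, 1, 1, 2]]"
  by code_simp

section \<open>The Dynkin and extended Dynkin graphs\<close>

lemma dynkin_witness_if_relabelled_table:
  fixes S :: "'a::order set"
  assumes "witness_table n es m c \<delta> ds" "bij_betw \<sigma> V {..<n}"
    and "\<forall>i\<in>V. \<forall>j\<in>V. graph_adj E i j \<longleftrightarrow> graph_adj (set es) (\<sigma> i) (\<sigma> j)"
    and "hasse_labelling S \<phi> V E" "x \<in> S" "\<sigma> (\<phi> x) = m"
  shows "dynkin_witness S x c \<delta>"
  using dynkin_witness_if_witness_table[OF assms(1) hasse_labelling_relabel[OF assms(4,2,3)]] assms(5,6)
  by simp

lemma terminal_dynkin_point_by_table_and_arm:
  fixes S :: "'a::order set" and a :: "nat \<Rightarrow> nat"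
  assumes iso: "hasse_iso S G"
    and table: "witness_table n es m c \<delta> ds"
    and relabel: "bij_betw \<sigma> V\<^sub>0 {..<n}" "\<sigma> (a 0) = m"
      "\<forall>i\<in>V\<^sub>0. \<forall>j\<in>V\<^sub>0. graph_adj (snd G) i j \<longleftrightarrow> graph_adj (set es) (\<sigma> i) (\<sigma> j)"
    and base_leaf: "a 0 \<in> V\<^sub>0" "r \<in> V\<^sub>0" "\<forall>v\<in>V\<^sub>0. graph_adj (snd G) (a 0) v \<longleftrightarrow> v = r"
    and arm: "graph_arm (snd G) V\<^sub>0 a L"
    and vertices: "V\<^sub>0 \<union> a ` {1..L} = {..<fst G}"
    and "\<bar>c + int L * (c - \<delta>)\<bar> \<le> 2"
  shows "\<exists>s\<in>S. terminal_point S s \<and> dynkin_point S s"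
proof -
  let ?E = "snd G"
  have "finite V\<^sub>0"
    using bij_betw_finite[OF relabel(1)] by simp
  have base: "dynkin_witness S' y c \<delta>"
    if "hasse_labelling S' \<phi>' V\<^sub>0 ?E" "y \<in> S'" "\<phi>' y = a 0" for S' :: "'a set" and \<phi>' y
    using dynkin_witness_if_relabelled_table[OF table relabel(1,3) that(1,2)] that(3) relabel(2) by simp
  have wit: "dynkin_witness S x (c + int L * (c - \<delta>)) (c + (int L - 1) * (c - \<delta>))"
    if "hasse_labelling S \<phi> {..<fst G} ?E" "x \<in> S" "\<phi> x = a L" for \<phi> x
  proof -
    have lab: "hasse_labelling S \<phi> (V\<^sub>0 \<union> a ` {1..L}) ?E"
      using that(1) vertices by simp
    show ?thesis
      by (rule dynkin_witness_along_arm[OF \<open>finite V\<^sub>0\<close> base_leaf(1-3) _ arm lab that(2,3)])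
        (auto intro: base)
  qed
  have tip: "\<forall>v<fst G. graph_adj ?E (a L) v \<longrightarrow> v = (if L = 0 then r else a (L - 1))"
  proof (intro allI impI)
    fix v
    assume "v < fst G" and adj: "graph_adj ?E (a L) v"
    then have "v \<in> V\<^sub>0 \<union> a ` {1..L}"
      using vertices by simp
    with adj show "v = (if L = 0 then r else a (L - 1))"
      using graph_arm_adj_iff[OF arm base_leaf, of L v] by simp
  qed
  show ?thesis
  proof (rule terminal_dynkin_point_if_witness_label[where i = "a L" and N = "fst G" and E = ?E])
    show "hasse_iso S (fst G, ?E)"
      using iso by simp
    have "a L \<in> V\<^sub>0 \<union> a ` {1..L}"
      using base_leaf(1) by (cases "L = 0") auto
    then show "a L < fst G"
      using vertices by auto
  qed (fact tip wit \<open>\<bar>c + int L * (c - \<delta>)\<bar> \<le> 2\<close>)+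
qed

lemma graph_adj_D_graph:
  "graph_adj (snd (D_graph n)) i j \<longleftrightarrow>
    (j = i + 1 \<and> j < n - 1) \<or> (i = j + 1 \<and> i < n - 1) \<or> (i = n - 3 \<and> j = n - 1) \<or> (j = n - 3 \<and> i = n - 1)"
  unfolding D_graph_def graph_adj_def path_edges_def by auto

lemma D_graph_terminal_dynkin_point:
  fixes S :: "'a::order set"
  assumes "4 \<le> n" and iso: "hasse_iso S (D_graph n)"
  shows "\<exists>s\<in>S. terminal_point S s \<and> dynkin_point S s"
proof -
  obtain m where n: "n = m + 4"
    using \<open>4 \<le> n\<close> le_Suc_ex by (metis add.commute)
  let ?E = "snd (D_graph n)" and ?V\<^sub>0 = "{m..<m + 4}" and ?a = "\<lambda>j. m - j"
  have adj: "graph_adj ?E i j \<longleftrightarrow>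
      (j = i + 1 \<and> j < m + 3) \<or> (i = j + 1 \<and> i < m + 3) \<or> (i = m + 1 \<and> j = m + 3) \<or> (j = m + 1 \<and> i = m + 3)"
    for i j
    unfolding graph_adj_D_graph n by auto
  have table_adj: "graph_adj ?E (m + a) (m + b) \<longleftrightarrow> graph_adj (set [(0, 1), (1, 2), (1, 3)]) a b"
    if "a < 4" "b < 4" for a b
  proof -
    have "a = 0 \<or> a = 1 \<or> a = 2 \<or> a = 3" "b = 0 \<or> b = 1 \<or> b = 2 \<or> b = 3"
      using that by presburger+
    then show ?thesis
      unfolding adj by (elim disjE) (simp_all add: graph_adj_def)
  qed
  show ?thesis
  proof (rule terminal_dynkin_point_by_table_and_arm[OF iso witness_table_D4,
        where \<sigma> = "\<lambda>i. i - m" and V\<^sub>0 = ?V\<^sub>0 and a = ?a and r = "m + 1" and L = m])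
    show "bij_betw (\<lambda>i. i - m) ?V\<^sub>0 {..<4}"
      by (rule bij_betw_byWitness[where f' = "\<lambda>i. i + m"]) auto
    show "\<forall>i\<in>?V\<^sub>0. \<forall>j\<in>?V\<^sub>0.
        graph_adj ?E i j \<longleftrightarrow> graph_adj (set [(0, 1), (1, 2), (1, 3)]) (i - m) (j - m)"
      using table_adj
      by (metis (no_types, lifting) atLeastLessThan_iff le_add_diff_inverse less_diff_conv2 add.commute)
    show "graph_arm ?E ?V\<^sub>0 ?a m"
      unfolding graph_arm_def adj by (auto simp: inj_on_def)
    have "v \<in> ?a ` {1..m}" if "v < m" for v
      using that by (intro image_eqI[of _ _ "m - v"]) auto
    then show "?V\<^sub>0 \<union> ?a ` {1..m} = {..<fst (D_graph n)}"
      unfolding n D_graph_def by (auto simp: not_le[symmetric]) blast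
  qed (auto simp: adj)
qed

lemma path_edges_eq: "path_edges k = set (map (\<lambda>i. (i, i + 1)) [0..<k - 1])"
  unfolding path_edges_def by auto

lemmas concrete_graph_simps = path_edges_eq graph_adj_def graph_arm_def inj_on_def bij_betw_def
  atLeastAtMost_upt upt_rec lessThan_nat_numeral lessThan_Suc

lemma E_graph_terminal_dynkin_point:
  fixes S :: "'a::order set"
  assumes "n \<in> {6, 7, 8}" and iso: "hasse_iso S (E_graph n)"
  shows "\<exists>s\<in>S. terminal_point S s \<and> dynkin_point S s"
proof -
  consider "n = 6" | "n = 7" | "n = 8"
    using assms(1) by blast
  then show ?thesis
  proof cases
    case 1
    show ?thesis
      by (rule terminal_dynkin_point_by_table_and_arm[OF iso witness_table_E6,
            where \<sigma> = id and V\<^sub>0 = "{0, 1, 2, 3, 4, 5}"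
              and a = "(+) 5" and r = 2 and L = 0])
        (simp_all add: 1 E_graph_def concrete_graph_simps, (blast+)?)
  next
    case 2
    show ?thesis
      by (rule terminal_dynkin_point_by_table_and_arm[OF iso witness_table_D5,
            where \<sigma> = "\<lambda>i. if i = 6 then 4 else i" and V\<^sub>0 = "{0, 1, 2, 3, 6}"
              and a = "(+) 3" and r = 2 and L = 2])
        (simp_all add: 2 E_graph_def concrete_graph_simps, (blast+)?)
  next
    case 3
    show ?thesis
      by (rule terminal_dynkin_point_by_table_and_arm[OF iso witness_table_D5,
            where \<sigma> = "\<lambda>i. if i = 7 then 4 else i" and V\<^sub>0 = "{0, 1, 2, 3, 7}"
              and a = "(+) 3" and r = 2 and L = 3])
        (simp_all add: 3 E_graph_def concrete_graph_simps, (blast+)?)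
  qed
qed

lemma E6_ext_terminal_dynkin_point:
  fixes S :: "'a::order set"
  assumes "hasse_iso S E6_ext"
  shows "\<exists>s\<in>S. terminal_point S s \<and> dynkin_point S s"
  by (rule terminal_dynkin_point_by_table_and_arm[OF assms witness_table_E6,
        where \<sigma> = id and V\<^sub>0 = "{0, 1, 2, 3, 4, 5}"
              and a = "(+) 5" and r = 2 and L = 1])
    (simp_all add: E6_ext_def concrete_graph_simps, (blast+)?)

lemma E7_ext_terminal_dynkin_point:
  fixes S :: "'a::order set"
  assumes "hasse_iso S E7_ext"
  shows "\<exists>s\<in>S. terminal_point S s \<and> dynkin_point S s"
  by (rule terminal_dynkin_point_by_table_and_arm[OF assms witness_table_D6,
        where \<sigma> = "\<lambda>i. if i = 7 then 5 else i" and V\<^sub>0 = "{0, 1, 2, 3, 4, 7}"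
              and a = "(+) 4" and r = 3 and L = 2])
    (simp_all add: E7_ext_def concrete_graph_simps, (blast+)?)

lemma E8_ext_terminal_dynkin_point:
  fixes S :: "'a::order set"
  assumes "hasse_iso S E8_ext"
  shows "\<exists>s\<in>S. terminal_point S s \<and> dynkin_point S s"
  by (rule terminal_dynkin_point_by_table_and_arm[OF assms witness_table_D5,
        where \<sigma> = "\<lambda>i. if i = 8 then 4 else i" and V\<^sub>0 = "{0, 1, 2, 3, 8}"
              and a = "(+) 3" and r = 2 and L = 4])
    (simp_all add: E8_ext_def concrete_graph_simps, (blast+)?)

theorem proposition5:
  fixes S :: "'a::order set"
  assumes "finite S"
    and "(\<exists>n\<ge>4. hasse_iso S (D_graph n)) \<or> (\<exists>n\<in>{6,7,8}. hasse_iso S (E_graph n))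
         \<or> hasse_iso S E6_ext \<or> hasse_iso S E7_ext \<or> hasse_iso S E8_ext"
  shows "\<exists>s\<in>S. terminal_point S s \<and> dynkin_point S s"
proof -
  consider (D) n where "4 \<le> n" "hasse_iso S (D_graph n)"
    | (E) n where "n \<in> {6, 7, 8}" "hasse_iso S (E_graph n)"
    | (E6_ext) "hasse_iso S E6_ext" | (E7_ext) "hasse_iso S E7_ext" | (E8_ext) "hasse_iso S E8_ext"
    using assms(2) by blast
  then show ?thesis
  proof cases
    case D
    then show ?thesis by (rule D_graph_terminal_dynkin_point)
  next
    case E
    then show ?thesis by (rule E_graph_terminal_dynkin_point)
  next
    case E6_ext
    then show ?thesis by (rule E6_ext_terminal_dynkin_point)
  next
    case E7_ext
    then show ?thesis by (rule E7_ext_terminal_dynkin_point)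
  next
    case E8_ext
    then show ?thesis by (rule E8_ext_terminal_dynkin_point)
  qed
qed

end
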